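(* Let $G$ be an abelian profinite group. Then $G$ is a profinite-$C$ group if and only if $G$ is an internal cartesian product of subgroups of prime order.
   Context: A permutable complement of a subgroup $H$ of a group $G$ is a subgroup $K$ with $G=HK$ and $H\cap K=1$. A profinite group $G$ is a profinite-$C$ group if every closed subgroup of $G$ has a closed permutable complement in $G$. A profinite group $G$ is the internal cartesian product of a family $\{H_i\}_{i\in I}$ of its subgroups if: each $H_i$ is a closed normal subgroup of $G$; $G$ is the topological closure of $\langle H_i\mid i\in I\rangle$; and $\bigcap_{i\in I}\overline{\langle H_j\mid j\ne i\rangle}=1$. *)

theory Defs
  imports "HOL-Analysis.Analysis" "HOL-Algebra.Algebra"
begin

definition topological_group :: "('a, 'b) monoid_scheme \<Rightarrow> 'a topology \<Rightarrow> bool" where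
  "topological_group G T \<longleftrightarrow>
     group G \<and> topspace T = carrier G \<and>
     continuous_map (prod_topology T T) T (\<lambda>(x, y). x \<otimes>\<^bsub>G\<^esub> y) \<and>
     continuous_map T T (\<lambda>x. inv\<^bsub>G\<^esub> x)"

definition profinite_group :: "('a, 'b) monoid_scheme \<Rightarrow> 'a topology \<Rightarrow> bool" where
  "profinite_group G T \<longleftrightarrow>
     topological_group G T \<and> compact_space T \<and> Hausdorff_space T \<and>
     (\<forall>S. connectedin T S \<longrightarrow> (\<exists>a. S \<subseteq> {a}))"

definition permutable_complement :: "('a, 'b) monoid_scheme \<Rightarrow> 'a set \<Rightarrow> 'a set \<Rightarrow> bool" where
  "permutable_complement G H K \<longleftrightarrow>
     subgroup K G \<and> H <#>\<^bsub>G\<^esub> K = carrier G \<and> H \<inter> K = {\<one>\<^bsub>G\<^esub>}"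

definition profinite_C_group :: "('a, 'b) monoid_scheme \<Rightarrow> 'a topology \<Rightarrow> bool" where
  "profinite_C_group G T \<longleftrightarrow>
     profinite_group G T \<and>
     (\<forall>H. subgroup H G \<and> closedin T H \<longrightarrow>
        (\<exists>K. closedin T K \<and> permutable_complement G H K))"

text \<open>Internal cartesian product of the family H indexed by I. The intersection is
  taken inside the carrier (relevant only for the empty family).\<close>
definition internal_cartesian_product ::
    "('a, 'b) monoid_scheme \<Rightarrow> 'a topology \<Rightarrow> 'i set \<Rightarrow> ('i \<Rightarrow> 'a set) \<Rightarrow> bool" where
  "internal_cartesian_product G T I H \<longleftrightarrow>
     (\<forall>i\<in>I. closedin T (H i) \<and> H i \<lhd> G) \<and>
     T closure_of (generate G (\<Union>i\<in>I. H i)) = carrier G \<and>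
     carrier G \<inter> (\<Inter>i\<in>I. T closure_of (generate G (\<Union>j\<in>I - {i}. H j))) = {\<one>\<^bsub>G\<^esub>}"

end

theory Submission
  imports Defs
begin

text \<open>
  If \<open>G\<close> is an internal cartesian product of factors \<open>H\<^sub>i\<close> of prime order and \<open>A\<close> is a
  closed subgroup, Zorn's lemma and compactness give a minimal closed subgroup \<open>K\<close> with
  \<open>AK = G\<close>. A nontrivial \<open>a \<in> A \<inter> K\<close> avoids the closure \<open>N\<^sub>i\<close> of the other factors for
  some \<open>i\<close>; as \<open>H\<^sub>i\<close> is generated by the \<open>H\<^sub>i\<close>-component of \<open>a\<close>, multiplying by powers of \<open>a\<close>
  shows that \<open>K \<inter> N\<^sub>i\<close> is still a closed supplement of \<open>A\<close>, contradicting minimality.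

  Conversely, let \<open>G\<close> be a profinite C-group and \<open>x \<noteq> 1\<close>. By zero-dimensionality some open
  subgroup avoids \<open>x\<close>; a maximal subgroup \<open>M\<close> containing it and avoiding \<open>x\<close> is closed, and
  the component of \<open>x\<close> in a complement \<open>Z\<close> of \<open>M\<close> lies in every nontrivial cyclic subgroup
  of \<open>Z\<close>. Complementing that cyclic subgroup once more shows that \<open>Z\<close> has prime order.
  A maximal family of such subgroups in which no member contains the intersection of the
  others has trivial intersection, and these intersections of all members but one are the
  prime order factors of an internal cartesian product.
\<close>

section \<open>Products of subgroups\<close>

lemma mem_set_mult_iff: "g \<in> A <#>\<^bsub>G\<^esub> B \<longleftrightarrow> (\<exists>a\<in>A. \<exists>b\<in>B. g = a \<otimes>\<^bsub>G\<^esub> b)"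
  by (auto simp: set_mult_def)

context group
begin

lemma mult_inv_cancel_left [simp]: "x \<in> carrier G \<Longrightarrow> y \<in> carrier G \<Longrightarrow> x \<otimes> (inv x \<otimes> y) = y"
  by (simp flip: m_assoc)

lemma inv_mult_cancel_left [simp]: "x \<in> carrier G \<Longrightarrow> y \<in> carrier G \<Longrightarrow> inv x \<otimes> (x \<otimes> y) = y"
  by (simp flip: m_assoc)

lemma subgroup_eq_if_Int_supplement_trivial:
  assumes H: "subgroup H G" and L: "subgroup L G" "H \<subseteq> L" and K: "subgroup K G"
    and HK: "H <#> K = carrier G" and LK: "L \<inter> K = {\<one>}"
  shows "L = H"
proof
  show "L \<subseteq> H"
  proof
    fix z assume z: "z \<in> L"
    then have "z \<in> H <#> K" using HK subgroup.mem_carrier[OF L(1)] by blast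
    then obtain x y where xy: "x \<in> H" "y \<in> K" "z = x \<otimes> y" unfolding mem_set_mult_iff by blast
    have c: "x \<in> carrier G" "y \<in> carrier G"
      using xy subgroup.mem_carrier[OF H] subgroup.mem_carrier[OF K] by auto
    have "inv x \<otimes> z \<in> L"
      using L xy(1) z by (blast intro: subgroup.m_closed subgroup.m_inv_closed)
    moreover have "inv x \<otimes> z = y" using xy(3) c by simp
    ultimately have "y = \<one>" using LK xy(2) by blast
    then show "z \<in> H" using xy c by simp
  qed
qed (rule L(2))

lemma subgroup_Union_chain:
  assumes "\<C> \<noteq> {}" and chain: "subset.chain {H. subgroup H G} \<C>"
  shows "subgroup (\<Union>\<C>) G"
proof -
  have sg: "subgroup H G" if "H \<in> \<C>" for H
    using chain that by (auto simp: subset_chain_def)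
  show ?thesis
  proof (rule subgroup.intro)
    show "\<Union>\<C> \<subseteq> carrier G" using sg subgroup.subset by blast
    obtain H0 where "H0 \<in> \<C>" using assms(1) by blast
    then show "\<one> \<in> \<Union>\<C>" using sg subgroup.one_closed by blast
    fix x y assume "x \<in> \<Union>\<C>" "y \<in> \<Union>\<C>"
    then have "{x, y} \<subseteq> \<Union>\<C>" by blast
    then obtain H where H: "H \<in> \<C>" "{x, y} \<subseteq> H"
      using finite_subset_Union_chain[OF finite.insertI[OF finite.insertI[OF finite.emptyI]] _ assms]
      by blast
    then have "x \<otimes> y \<in> H" using subgroup.m_closed[OF sg[OF H(1)]] by simp
    then show "x \<otimes> y \<in> \<Union>\<C>" using H(1) by blast
  next
    fix x assume "x \<in> \<Union>\<C>"
    then obtain H where H: "H \<in> \<C>" "x \<in> H" by blast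
    then have "inv x \<in> H" using subgroup.m_inv_closed[OF sg[OF H(1)]] by simp
    then show "inv x \<in> \<Union>\<C>" using H(1) by blast
  qed
qed

lemma subgroup_right_stabilizer:
  assumes "U \<subseteq> carrier G"
  shows "subgroup {g \<in> carrier G. \<forall>u\<in>U. u \<otimes> g \<in> U \<and> u \<otimes> inv g \<in> U} G"
    (is "subgroup ?V G")
proof (rule subgroup.intro)
  fix g h assume g: "g \<in> ?V" and h: "h \<in> ?V"
  have "u \<otimes> (g \<otimes> h) \<in> U \<and> u \<otimes> inv (g \<otimes> h) \<in> U" if u: "u \<in> U" for u
  proof -
    have c: "u \<in> carrier G" "g \<in> carrier G" "h \<in> carrier G" using u g h assms by auto
    have "(u \<otimes> g) \<otimes> h \<in> U" "(u \<otimes> inv h) \<otimes> inv g \<in> U" using g h u by blast+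
    then show ?thesis using c by (simp add: m_assoc inv_mult_group)
  qed
  then show "g \<otimes> h \<in> ?V" using g h by blast
next
  fix g assume "g \<in> ?V"
  then show "inv g \<in> ?V" by simp
next
  have "u \<otimes> \<one> = u" if "u \<in> U" for u using that assms by auto
  then show "\<one> \<in> ?V" by simp
qed auto

lemma prime_card_subgroup_eq_generate:
  assumes H: "subgroup H G" and prime: "Factorial_Ring.prime (card H)"
    and h: "h \<in> H" "h \<noteq> \<one>"
  shows "generate G {h} = H"
proof -
  have "finite H"
  proof (rule ccontr)
    assume "infinite H"
    then show False using prime by simp
  qed
  have sub: "generate G {h} \<subseteq> H"
    using generate_subgroup_incl H h by simp
  moreover have "subgroup (generate G {h}) G"
    using generate_is_subgroup subgroup.mem_carrier[OF H h(1)] by simp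
  ultimately have "subgroup (generate G {h}) (G\<lparr>carrier := H\<rparr>)"
    using subgroup_incl[OF _ H] by blast
  then have "card (rcosets\<^bsub>G\<lparr>carrier := H\<rparr>\<^esub> (generate G {h})) * card (generate G {h}) = card H"
    using group.lagrange[OF subgroup_imp_group[OF H]] by (simp add: order_def)
  then have "card (generate G {h}) dvd card H" by (metis dvd_triv_right)
  moreover have "card {\<one>, h} \<le> card (generate G {h})"
    using generate.one generate.incl[of h "{h}"] sub \<open>finite H\<close>
    by (intro card_mono) (auto intro: finite_subset)
  then have "card (generate G {h}) \<noteq> 1" using h by simp
  ultimately have "card (generate G {h}) = card H"
    using prime unfolding prime_nat_iff by blast
  then show ?thesis using card_subset_eq[OF \<open>finite H\<close> sub] by simp
qed

lemma ord_ne_0_if_generated_by_square: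
  assumes z: "z \<in> carrier G" and "z [^] (2::int) \<noteq> \<one> \<Longrightarrow> z \<in> generate G {z [^] (2::int)}"
  shows "ord z \<noteq> 0"
proof
  assume ord0: "ord z = 0"
  then have "z [^] (2::int) \<noteq> \<one>" using int_pow_eq_id[OF z] by simp
  then have "z \<in> generate G {z [^] (2::int)}" using assms(2) by blast
  then obtain k :: int where "z = (z [^] (2::int)) [^] k"
    using generate_pow z by auto
  then have "z [^] (1::int) = z [^] (2 * k)" using z by (simp add: int_pow_pow)
  then have "int (ord z) dvd 2 * k - 1" using int_pow_eq[OF z] by blast
  then have "2 * k - 1 = 0" using ord0 by simp
  then show False by presburger
qed

lemma prime_ord_if_generated_by_all_powers:
  assumes z: "z \<in> carrier G" "z \<noteq> \<one>"
    and gen: "\<And>w. w \<in> generate G {z} \<Longrightarrow> w \<noteq> \<one> \<Longrightarrow> z \<in> generate G {w}"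
  shows "Factorial_Ring.prime (ord z)"
proof -
  have pow: "z [^] (n::nat) \<in> generate G {z}" for n
  proof -
    have "z [^] n = z [^] (int n)" by (simp add: int_pow_int)
    then show ?thesis unfolding generate_pow[OF z(1)] by blast
  qed
  have "z [^] (2::int) \<in> generate G {z}"
    unfolding generate_pow[OF z(1)] by blast
  then have "ord z \<noteq> 0"
    using ord_ne_0_if_generated_by_square[OF z(1)] gen by blast
  moreover have "ord z \<noteq> 1" using ord_eq_1 z by blast
  ultimately obtain p where p: "Factorial_Ring.prime p" "p dvd ord z"
    using prime_factor_nat by blast
  then obtain q where q: "ord z = p * q" by blast
  define w where "w = z [^] q"
  have "q \<noteq> 0" using q \<open>ord z \<noteq> 0\<close> by auto
  then have "ord w = p" using ord_pow[OF z(1), of q] q by (simp add: w_def)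
  then have "w \<noteq> \<one>" using p(1) by auto
  then have "z \<in> generate G {w}" using gen pow by (simp add: w_def)
  then have "generate G {z} \<subseteq> generate G {w}"
    using generate_subgroup_incl generate_is_subgroup z(1) by (simp add: w_def)
  moreover have "card (generate G {w}) = p"
    using generate_pow_card \<open>ord w = p\<close> z(1) by (simp add: w_def)
  moreover have "p \<noteq> 0" using p(1) by auto
  ultimately have "ord z \<le> p"
    using generate_pow_card[OF z(1)] card_mono[of "generate G {w}" "generate G {z}"]
      card_ge_0_finite[of "generate G {w}"] by simp
  with p \<open>ord z \<noteq> 0\<close> have "ord z = p" using dvd_imp_le by (simp add: le_antisym)
  then show ?thesis using p(1) by simp
qed

lemma complement_factors_unique:
  assumes M: "subgroup M G" and Z: "subgroup Z G" and MZ: "M \<inter> Z = {\<one>}"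
    and "m \<in> M" "m' \<in> M" "z \<in> Z" "z' \<in> Z" and eq: "m \<otimes> z = m' \<otimes> z'"
  shows "m = m' \<and> z = z'"
proof -
  have c: "m \<in> carrier G" "m' \<in> carrier G" "z \<in> carrier G" "z' \<in> carrier G"
    using assms subgroup.subset by blast+
  have "inv m' \<otimes> m = inv m' \<otimes> (m \<otimes> z) \<otimes> inv z" using c by (simp add: m_assoc)
  also have "\<dots> = inv m' \<otimes> (m' \<otimes> z') \<otimes> inv z" using eq by simp
  also have "\<dots> = z' \<otimes> inv z" using c by (simp flip: m_assoc)
  finally have "inv m' \<otimes> m = z' \<otimes> inv z" .
  moreover have "inv m' \<otimes> m \<in> M" "z' \<otimes> inv z \<in> Z"
    using assms by (auto intro: subgroup.m_closed subgroup.m_inv_closed)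
  ultimately have "inv m' \<otimes> m \<in> M \<inter> Z" "z' \<otimes> inv z \<in> M \<inter> Z" by simp_all
  then have "inv m' \<otimes> m = \<one>" "z' \<otimes> inv z = \<one>" unfolding MZ by simp_all
  moreover have "m = m' \<otimes> (inv m' \<otimes> m)" "z' = (z' \<otimes> inv z) \<otimes> z"
    using c by (simp, simp add: m_assoc)
  ultimately show ?thesis using c by simp
qed

lemma card_le_if_complement:
  assumes A: "subgroup A G" and B: "subgroup B G" and M: "subgroup M G"
    and AM: "A \<inter> M = {\<one>}" and BM: "carrier G \<subseteq> B <#> M" and "finite B"
  shows "finite A \<and> card A \<le> card B"
proof -
  define f where "f a = (SOME b. b \<in> B \<and> (\<exists>m\<in>M. a = b \<otimes> m))" for a
  have f: "f a \<in> B \<and> (\<exists>m\<in>M. a = f a \<otimes> m)" if "a \<in> A" for a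
  proof -
    have "a \<in> B <#> M" using that BM subgroup.mem_carrier[OF A] by blast
    then have "\<exists>b. b \<in> B \<and> (\<exists>m\<in>M. a = b \<otimes> m)" unfolding mem_set_mult_iff by blast
    then show ?thesis unfolding f_def by (rule someI_ex)
  qed
  have inj: "inj_on f A"
  proof (rule inj_onI)
    fix a a' assume a: "a \<in> A" "a' \<in> A" and eq: "f a = f a'"
    define b where "b = f a"
    have "b \<in> B" "\<exists>m\<in>M. a = b \<otimes> m" "\<exists>m'\<in>M. a' = b \<otimes> m'"
      using f[OF a(1)] f[OF a(2)] eq by (simp_all add: b_def)
    then obtain m m' where m: "m \<in> M" "m' \<in> M" and "a = b \<otimes> m" "a' = b \<otimes> m'"
      by blast
    moreover have "b \<in> carrier G" "m \<in> carrier G" "m' \<in> carrier G"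
      using \<open>b \<in> B\<close> m subgroup.mem_carrier[OF B] subgroup.mem_carrier[OF M] by blast+
    ultimately have eq': "a \<otimes> inv m = a' \<otimes> inv m'" by (simp add: m_assoc)
    have "inv m \<in> M" "inv m' \<in> M" using m subgroup.m_inv_closed[OF M] by blast+
    from complement_factors_unique[OF A M AM a this eq'] show "a = a'" by blast
  qed
  have img: "f ` A \<subseteq> B" using f by blast
  show ?thesis
    using inj_on_finite[OF inj img \<open>finite B\<close>] card_inj_on_le[OF inj img \<open>finite B\<close>] by simp
qed

end

context comm_group
begin

lemma set_mult_comm:
  assumes "A \<subseteq> carrier G" "B \<subseteq> carrier G"
  shows "A <#> B = B <#> A"
proof -
  have "C <#> D \<subseteq> D <#> C" if CD: "C \<subseteq> carrier G" "D \<subseteq> carrier G" for C D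
  proof
    fix g assume "g \<in> C <#> D"
    then obtain c d where cd: "c \<in> C" "d \<in> D" "g = c \<otimes> d" unfolding mem_set_mult_iff by blast
    have "c \<in> carrier G" "d \<in> carrier G" using cd(1,2) CD by auto
    then have "g = d \<otimes> c" using m_comm[of c d] cd(3) by simp
    then show "g \<in> D <#> C" using cd(1,2) unfolding mem_set_mult_iff by blast
  qed
  then show ?thesis using assms by blast
qed

lemma mem_set_mult_generate_if_maximal_avoiding:
  assumes M: "subgroup M G" and max: "\<And>N. subgroup N G \<Longrightarrow> M \<subseteq> N \<Longrightarrow> x \<notin> N \<Longrightarrow> N = M"
    and w: "w \<in> carrier G" "w \<notin> M"
  shows "x \<in> M <#> generate G {w}"
proof (rule ccontr)
  assume x: "x \<notin> M <#> generate G {w}"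
  have "subgroup (M <#> generate G {w}) G"
    using M w by (simp add: mult_subgroups generate_is_subgroup)
  moreover have "m = m \<otimes> \<one>" if "m \<in> M" for m
    using subgroup.mem_carrier[OF M that] by simp
  then have "M \<subseteq> M <#> generate G {w}"
    using generate.one[of G "{w}"] unfolding subset_iff mem_set_mult_iff by blast
  ultimately have "M <#> generate G {w} = M" using max x by blast
  moreover have "w \<in> M <#> generate G {w}"
    using w generate.incl[of w "{w}" G] subgroup.one_closed[OF M] unfolding mem_set_mult_iff by force
  ultimately show False using w by blast
qed

lemma mem_generate_if_maximal_avoiding:
  assumes M: "subgroup M G" and max: "\<And>N. subgroup N G \<Longrightarrow> M \<subseteq> N \<Longrightarrow> x \<notin> N \<Longrightarrow> N = M"
    and Z: "subgroup Z G" "M \<inter> Z = {\<one>}"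
    and x: "x = m \<otimes> z" "m \<in> M" "z \<in> Z" and w: "w \<in> Z" "w \<noteq> \<one>"
  shows "z \<in> generate G {w}"
proof -
  have "w \<in> carrier G" "w \<notin> M" using w Z subgroup.subset by blast+
  then obtain m' w' where "m' \<in> M" "w' \<in> generate G {w}" "x = m' \<otimes> w'"
    using mem_set_mult_generate_if_maximal_avoiding[OF M max] unfolding mem_set_mult_iff by blast
  moreover have "generate G {w} \<subseteq> Z" using generate_subgroup_incl Z(1) w(1) by simp
  ultimately show ?thesis
    using complement_factors_unique[OF M Z] x by blast
qed

lemma set_mult_eq_carrier_if_prime_complement:
  assumes M: "subgroup M G" and Z: "subgroup Z G" "Factorial_Ring.prime (card Z)"
    and MZ: "M \<inter> Z = {\<one>}" "M <#> Z = carrier G"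
    and N: "subgroup N G" "\<not> N \<subseteq> M"
  shows "N <#> M = carrier G"
proof
  have NM: "subgroup (N <#> M) G" using N M by (simp add: mult_subgroups)
  then show "N <#> M \<subseteq> carrier G" by (rule subgroup.subset)
  obtain n where n: "n \<in> N" "n \<notin> M" using N(2) by blast
  then have "n \<in> M <#> Z" using MZ(2) subgroup.subset[OF N(1)] by blast
  then obtain m z where mz: "m \<in> M" "z \<in> Z" "n = m \<otimes> z" unfolding mem_set_mult_iff by blast
  have c: "m \<in> carrier G" "z \<in> carrier G" using mz M Z subgroup.subset by blast+
  have "z \<noteq> \<one>" using mz n c by auto
  have "n \<otimes> inv m = z \<otimes> m \<otimes> inv m" using mz(3) c by (simp add: m_comm[of m z])
  also have "\<dots> = z" using c by (simp add: m_assoc)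
  finally have "n \<otimes> inv m = z" .
  moreover have "inv m \<in> M" using M mz(1) by (rule subgroup.m_inv_closed)
  ultimately have "z \<in> N <#> M"
    using n(1) unfolding mem_set_mult_iff by blast
  then have Z_sub: "Z \<subseteq> N <#> M"
    using prime_card_subgroup_eq_generate[OF Z mz(2) \<open>z \<noteq> \<one>\<close>] generate_subgroup_incl[OF _ NM] by auto
  have "m = \<one> \<otimes> m" if "m \<in> M" for m
    using subgroup.mem_carrier[OF M that] by simp
  then have "M \<subseteq> N <#> M"
    using subgroup.one_closed[OF N(1)] unfolding subset_iff mem_set_mult_iff by blast
  then have "M <#> Z \<subseteq> (N <#> M) <#> (N <#> M)" using Z_sub by (rule mono_set_mult)
  then show "carrier G \<subseteq> N <#> M" using MZ(2) subgroup_mult_id[OF NM] by simp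
qed

end

section \<open>Topological groups\<close>

locale topgroup =
  fixes G :: "('a, 'b) monoid_scheme" (structure) and T :: "'a topology"
  assumes topological_group: "topological_group G T"
begin

sublocale group G
  using topological_group by (simp add: topological_group_def)

lemma topspace_eq [simp]: "topspace T = carrier G"
  using topological_group by (simp add: topological_group_def)

lemma continuous_map_mult:
  assumes "continuous_map Y T f" "continuous_map Y T g"
  shows "continuous_map Y T (\<lambda>x. f x \<otimes> g x)"
proof -
  have "continuous_map (prod_topology T T) T (\<lambda>(x, y). x \<otimes> y)"
    using topological_group by (simp add: topological_group_def)
  from continuous_map_compose[OF continuous_map_pairedI[OF assms] this] show ?thesis
    by (simp add: o_def)
qed

lemma continuous_map_inv:
  assumes "continuous_map Y T f"
  shows "continuous_map Y T (\<lambda>x. inv (f x))"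
proof -
  have "continuous_map T T (\<lambda>x. inv x)"
    using topological_group by (simp add: topological_group_def)
  from continuous_map_compose[OF assms this] show ?thesis
    by (simp add: o_def)
qed

lemma continuous_map_lmult: "a \<in> carrier G \<Longrightarrow> continuous_map T T (\<lambda>y. a \<otimes> y)"
  by (intro continuous_map_mult continuous_map_id[unfolded id_def]) simp

lemma subgroup_closure_of:
  assumes "subgroup S G"
  shows "subgroup (T closure_of S) G"
proof (rule subgroup.intro)
  have S: "S \<subseteq> carrier G" by (rule subgroup.subset[OF assms])
  show "T closure_of S \<subseteq> carrier G"
    using closure_of_subset_topspace[of T S] by simp
  show "\<one> \<in> T closure_of S"
    using closure_of_subset[of S T] S subgroup.one_closed[OF assms] by auto
  have mult: "continuous_map (prod_topology T T) T (\<lambda>(x, y). x \<otimes> y)"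
    using topological_group by (simp add: topological_group_def)
  fix x y assume "x \<in> T closure_of S" "y \<in> T closure_of S"
  then have "(x, y) \<in> prod_topology T T closure_of (S \<times> S)"
    by (simp add: closure_of_Times)
  then have "x \<otimes> y \<in> T closure_of ((\<lambda>(x, y). x \<otimes> y) ` (S \<times> S))"
    using continuous_map_image_closure_subset[OF mult] by fastforce
  moreover have "(\<lambda>(x, y). x \<otimes> y) ` (S \<times> S) \<subseteq> S"
    using subgroup.m_closed[OF assms] by auto
  ultimately show "x \<otimes> y \<in> T closure_of S"
    using closure_of_mono by blast
next
  have inv: "continuous_map T T (\<lambda>x. inv x)"
    using topological_group by (simp add: topological_group_def)
  fix x assume "x \<in> T closure_of S"
  then have "inv x \<in> T closure_of ((\<lambda>x. inv x) ` S)"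
    using continuous_map_image_closure_subset[OF inv] by blast
  moreover have "(\<lambda>x. inv x) ` S \<subseteq> S"
    using subgroup.m_inv_closed[OF assms] by auto
  ultimately show "inv x \<in> T closure_of S"
    using closure_of_mono by blast
qed

lemma lmult_image_eq_preimage:
  assumes "S \<subseteq> carrier G" "a \<in> carrier G"
  shows "(\<lambda>s. a \<otimes> s) ` S = {y \<in> carrier G. inv a \<otimes> y \<in> S}"
proof (intro equalityI subsetI)
  fix y assume "y \<in> (\<lambda>s. a \<otimes> s) ` S"
  then obtain s where "s \<in> S" "y = a \<otimes> s" by blast
  then show "y \<in> {y \<in> carrier G. inv a \<otimes> y \<in> S}"
    using assms by (auto simp flip: m_assoc)
next
  fix y assume y: "y \<in> {y \<in> carrier G. inv a \<otimes> y \<in> S}"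
  then have "y = a \<otimes> (inv a \<otimes> y)" using assms(2) by (simp flip: m_assoc)
  then show "y \<in> (\<lambda>s. a \<otimes> s) ` S" using y by blast
qed

lemma closedin_lmult_image:
  assumes "closedin T S" "a \<in> carrier G"
  shows "closedin T ((\<lambda>s. a \<otimes> s) ` S)"
  using closedin_continuous_map_preimage[OF continuous_map_lmult[of "inv a"] assms(1)]
    lmult_image_eq_preimage[OF closedin_subset[OF assms(1), simplified]] assms(2) by simp

lemma openin_lmult_image:
  assumes "openin T S" "a \<in> carrier G"
  shows "openin T ((\<lambda>s. a \<otimes> s) ` S)"
  using openin_continuous_map_preimage[OF continuous_map_lmult[of "inv a"] assms(1)]
    lmult_image_eq_preimage[OF openin_subset[OF assms(1), simplified]] assms(2) by simp

lemma closedin_set_mult_finite: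
  assumes "finite A" "A \<subseteq> carrier G" "closedin T S"
  shows "closedin T (A <#> S)"
proof -
  have "A <#> S = (\<Union>a\<in>A. (\<lambda>s. a \<otimes> s) ` S)"
    by (auto simp: set_mult_def)
  moreover have "closedin T (\<Union>a\<in>A. (\<lambda>s. a \<otimes> s) ` S)"
    using assms by (intro closedin_Union) (auto intro: closedin_lmult_image)
  ultimately show ?thesis by simp
qed

lemma closedin_subgroup_containing_open:
  assumes V: "subgroup V G" "openin T V" and M: "subgroup M G" "V \<subseteq> M"
  shows "closedin T M"
proof -
  have "carrier G - M = (\<Union>y \<in> carrier G - M. (\<lambda>v. y \<otimes> v) ` V)"
  proof (intro equalityI subsetI)
    fix y assume y: "y \<in> carrier G - M"
    then have "y = y \<otimes> \<one>" by simp
    with y subgroup.one_closed[OF V(1)] show "y \<in> (\<Union>y \<in> carrier G - M. (\<lambda>v. y \<otimes> v) ` V)"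
      by blast
  next
    fix z assume "z \<in> (\<Union>y \<in> carrier G - M. (\<lambda>v. y \<otimes> v) ` V)"
    then obtain y v where y: "y \<in> carrier G" "y \<notin> M" and v: "v \<in> M" "v \<in> carrier G"
      and z: "z = y \<otimes> v"
      using M(2) subgroup.subset[OF V(1)] by blast
    have "z \<notin> M"
    proof
      assume "z \<in> M"
      then have "z \<otimes> inv v \<in> M" using v M(1) by (simp add: subgroup.m_closed subgroup.m_inv_closed)
      then show False using y v z by (simp add: m_assoc)
    qed
    then show "z \<in> carrier G - M" using y v z by simp
  qed
  moreover have "openin T (\<Union>y \<in> carrier G - M. (\<lambda>v. y \<otimes> v) ` V)"
    using V by (intro openin_Union) (auto intro: openin_lmult_image)
  ultimately have "openin T (carrier G - M)" by simp
  then show ?thesis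
    using subgroup.subset[OF M(1)] by (simp add: closedin_def)
qed

lemma exists_nbhd_right_mult_subset:
  assumes U: "compactin T U" "openin T U"
  obtains W where "openin T W" "\<one> \<in> W" "\<And>u w. u \<in> U \<Longrightarrow> w \<in> W \<Longrightarrow> u \<otimes> w \<in> U"
proof -
  have mult: "continuous_map (prod_topology T T) T (\<lambda>(x, y). x \<otimes> y)"
    using topological_group by (simp add: topological_group_def)
  define P where "P = {p \<in> topspace (prod_topology T T). (\<lambda>(x, y). x \<otimes> y) p \<in> U}"
  have "openin (prod_topology T T) P"
    unfolding P_def using openin_continuous_map_preimage[OF mult U(2)] .
  moreover have "U \<times> {\<one>} \<subseteq> P"
    using openin_subset[OF U(2)] by (auto simp: P_def)
  moreover have "\<one> \<in> topspace T" by simp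
  ultimately have "\<exists>V W. openin T V \<and> openin T W \<and> U \<subseteq> V \<and> \<one> \<in> W \<and> V \<times> W \<subseteq> P"
    by (intro tube_lemma_left[OF _ U(1)])
  then obtain V W where W: "openin T W" "\<one> \<in> W" and UV: "U \<subseteq> V" "V \<times> W \<subseteq> P"
    by blast
  have "u \<otimes> w \<in> U" if "u \<in> U" "w \<in> W" for u w
  proof -
    have "(u, w) \<in> P" using UV that by blast
    then show ?thesis by (simp add: P_def)
  qed
  with W show ?thesis by (rule that)
qed

lemma openin_right_stabilizer:
  assumes U: "U \<subseteq> carrier G" and W: "openin T W" "\<one> \<in> W"
    and UW: "\<And>u w. u \<in> U \<Longrightarrow> w \<in> W \<Longrightarrow> u \<otimes> w \<in> U"
  shows "openin T {g \<in> carrier G. \<forall>u\<in>U. u \<otimes> g \<in> U \<and> u \<otimes> inv g \<in> U}"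
    (is "openin T ?V")
proof -
  define W' where "W' = W \<inter> {w \<in> topspace T. inv w \<in> W}"
  have "continuous_map T T (\<lambda>x. inv x)"
    using continuous_map_inv[of T "\<lambda>x. x"] by simp
  then have "openin T W'"
    unfolding W'_def using W(1) by (intro openin_Int openin_continuous_map_preimage)
  have "\<one> \<in> W'" using W(2) by (simp add: W'_def)
  show ?thesis
  proof (subst openin_subopen, intro ballI)
    fix g assume g: "g \<in> ?V"
    then have gc: "g \<in> carrier G" by blast
    have "(\<lambda>w. g \<otimes> w) ` W' \<subseteq> ?V"
    proof
      fix y assume "y \<in> (\<lambda>w. g \<otimes> w) ` W'"
      then obtain w where w: "w \<in> carrier G" "w \<in> W" "inv w \<in> W" and y: "y = g \<otimes> w"
        by (auto simp: W'_def)
      have "u \<otimes> y \<in> U \<and> u \<otimes> inv y \<in> U" if u: "u \<in> U" for u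
      proof -
        have "(u \<otimes> g) \<otimes> w \<in> U" "(u \<otimes> inv w) \<otimes> inv g \<in> U"
          using g u w UW by blast+
        moreover have "u \<in> carrier G" using u U by blast
        ultimately show ?thesis using w(1) gc y by (simp add: m_assoc inv_mult_group)
      qed
      then show "y \<in> ?V" using w(1) gc y by blast
    qed
    moreover have "g \<in> (\<lambda>w. g \<otimes> w) ` W'"
      using gc \<open>\<one> \<in> W'\<close> by (intro image_eqI[of g _ \<one>]) simp_all
    moreover have "openin T ((\<lambda>w. g \<otimes> w) ` W')"
      using openin_lmult_image[OF \<open>openin T W'\<close> gc] .
    ultimately show "\<exists>V'. openin T V' \<and> g \<in> V' \<and> V' \<subseteq> ?V" by blast
  qed
qed

lemma exists_open_subgroup_subset:
  assumes U: "compactin T U" "openin T U" "\<one> \<in> U"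
  obtains V where "subgroup V G" "openin T V" "V \<subseteq> U"
proof -
  obtain W where W: "openin T W" "\<one> \<in> W" and UW: "\<And>u w. u \<in> U \<Longrightarrow> w \<in> W \<Longrightarrow> u \<otimes> w \<in> U"
    using exists_nbhd_right_mult_subset U(1,2) by blast
  have Uc: "U \<subseteq> carrier G" using openin_subset[OF U(2)] by simp
  let ?V = "{g \<in> carrier G. \<forall>u\<in>U. u \<otimes> g \<in> U \<and> u \<otimes> inv g \<in> U}"
  have "?V \<subseteq> U"
  proof
    fix g assume "g \<in> ?V"
    then have "\<one> \<otimes> g \<in> U" "g \<in> carrier G" using U(3) by auto
    then show "g \<in> U" by simp
  qed
  with subgroup_right_stabilizer[OF Uc] openin_right_stabilizer[OF Uc W UW] show ?thesis
    by (rule that)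
qed

end

section \<open>Profinite groups\<close>

lemma clopen_separation:
  assumes "compact_space Y" "Hausdorff_space Y"
    and subsingleton: "\<And>C. connectedin Y C \<Longrightarrow> \<exists>a. C \<subseteq> {a}"
    and "x \<in> topspace Y" "y \<in> topspace Y" "x \<noteq> y"
  obtains U where "closedin Y U" "openin Y U" "x \<in> U" "y \<notin> U"
proof -
  let ?Q = "quasi_component_of_set Y x"
  have "compactin Y ?Q"
    using closedin_compact_space[OF assms(1) closedin_quasi_component_of] .
  then have "?Q \<in> connected_components_of Y"
    using compact_quasi_eq_connected_components_of[OF compact_imp_locally_compact_space[OF assms(1)] assms(2)]
      quasi_component_in_quasi_components_of[of Y x] assms(4) by blast
  then obtain a where "?Q \<subseteq> {a}"
    using subsingleton connectedin_connected_components_of by blast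
  moreover have "x \<in> ?Q" using assms(4) by simp
  ultimately have "\<not> quasi_component_of Y x y" using assms(6) by blast
  then show ?thesis using that assms(4,5) unfolding quasi_component_of by blast
qed

lemma subset_Zorn_dual:
  assumes "\<A> \<noteq> {}" and "\<And>\<C>. \<C> \<noteq> {} \<Longrightarrow> subset.chain \<A> \<C> \<Longrightarrow> \<Inter>\<C> \<in> \<A>"
  shows "\<exists>M\<in>\<A>. \<forall>N\<in>\<A>. N \<subseteq> M \<longrightarrow> N = M"
proof -
  have "\<exists>M\<in>uminus ` \<A>. \<forall>N\<in>uminus ` \<A>. M \<subseteq> N \<longrightarrow> N = M"
  proof (rule subset_Zorn_nonempty)
    show "uminus ` \<A> \<noteq> {}" using assms(1) by simp
    fix \<C> assume C: "\<C> \<noteq> {}" "subset.chain (uminus ` \<A>) \<C>"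
    have "uminus ` \<C> \<noteq> {}" using C(1) by simp
    moreover have "subset.chain \<A> (uminus ` \<C>)"
    proof -
      have "uminus ` \<C> \<subseteq> \<A>"
      proof
        fix A assume "A \<in> uminus ` \<C>"
        then obtain B where "B \<in> \<C>" "A = - B" by blast
        moreover from C(2) \<open>B \<in> \<C>\<close> obtain A' where "A' \<in> \<A>" "B = - A'"
          unfolding subset_chain_def by blast
        ultimately show "A \<in> \<A>" by simp
      qed
      moreover have "A \<subseteq> B \<or> B \<subseteq> A" if AB: "A \<in> uminus ` \<C>" "B \<in> uminus ` \<C>" for A B
      proof -
        obtain A' B' where "A' \<in> \<C>" "B' \<in> \<C>" "A = - A'" "B = - B'" using AB by blast
        with C(2) show ?thesis unfolding subset_chain_def by auto
      qed
      ultimately show ?thesis unfolding subset_chain_def by blast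
    qed
    ultimately have "\<Inter>(uminus ` \<C>) \<in> \<A>" by (rule assms(2))
    then show "\<Union>\<C> \<in> uminus ` \<A>" by (rule image_eqI[rotated]) simp
  qed
  then obtain M where "M \<in> \<A>" and max: "\<And>N. N \<in> \<A> \<Longrightarrow> - M \<subseteq> - N \<Longrightarrow> - N = - M"
    by (auto simp: image_iff)
  have "N = M" if "N \<in> \<A>" "N \<subseteq> M" for N
    using max[OF that(1)] that(2) by simp
  with \<open>M \<in> \<A>\<close> show ?thesis by blast
qed

locale profinite =
  fixes G :: "('a, 'b) monoid_scheme" (structure) and T :: "'a topology"
  assumes profinite_group: "profinite_group G T"
begin

sublocale topgroup
  using profinite_group by (simp add: profinite_group_def topgroup_def)

lemma compact_space: "compact_space T"
  using profinite_group by (simp add: profinite_group_def)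

lemma Hausdorff_space: "Hausdorff_space T"
  using profinite_group by (simp add: profinite_group_def)

lemma exists_open_subgroup_avoiding:
  assumes "x \<in> carrier G" "x \<noteq> \<one>"
  obtains V where "subgroup V G" "openin T V" "x \<notin> V"
proof -
  have "compact_space T" "Hausdorff_space T" "\<And>C. connectedin T C \<Longrightarrow> \<exists>a. C \<subseteq> {a}"
    using profinite_group by (auto simp: profinite_group_def)
  moreover have "\<one> \<in> topspace T" "x \<in> topspace T" "\<one> \<noteq> x" using assms by auto
  ultimately obtain U where U: "closedin T U" "openin T U" "\<one> \<in> U" "x \<notin> U"
    by (rule clopen_separation)
  have "compactin T U" using closedin_compact_space[OF compact_space U(1)] .
  then obtain V where V: "subgroup V G" "openin T V" "V \<subseteq> U"
    using exists_open_subgroup_subset U(2,3) by blast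
  show ?thesis by (rule that[OF V(1,2)]) (use V(3) U(4) in blast)
qed

lemma exists_closed_maximal_subgroup_avoiding:
  assumes "x \<in> carrier G" "x \<noteq> \<one>"
  obtains M where "closedin T M" "subgroup M G" "x \<notin> M"
    "\<And>N. subgroup N G \<Longrightarrow> M \<subseteq> N \<Longrightarrow> x \<notin> N \<Longrightarrow> N = M"
proof -
  obtain V where V: "subgroup V G" "openin T V" "x \<notin> V"
    using exists_open_subgroup_avoiding assms by blast
  let ?\<A> = "{N. subgroup N G \<and> V \<subseteq> N \<and> x \<notin> N}"
  have "\<exists>M\<in>?\<A>. \<forall>N\<in>?\<A>. M \<subseteq> N \<longrightarrow> N = M"
  proof (rule subset_Zorn_nonempty)
    show "?\<A> \<noteq> {}" using V by blast
    fix \<C> assume \<C>: "\<C> \<noteq> {}" "subset.chain ?\<A> \<C>"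
    then have sub: "\<C> \<subseteq> ?\<A>" by (simp add: subset_chain_def)
    have "subset.chain {H. subgroup H G} \<C>" using \<C>(2) unfolding subset_chain_def by blast
    with \<C>(1) have "subgroup (\<Union>\<C>) G" by (rule subgroup_Union_chain)
    moreover obtain N0 where "N0 \<in> \<C>" using \<C>(1) by blast
    then have "V \<subseteq> \<Union>\<C>" using sub by blast
    moreover have "x \<notin> \<Union>\<C>" using sub by blast
    ultimately show "\<Union>\<C> \<in> ?\<A>" by simp
  qed
  then obtain M where "M \<in> ?\<A>" and max: "\<forall>N\<in>?\<A>. M \<subseteq> N \<longrightarrow> N = M" ..
  then have M: "subgroup M G" "V \<subseteq> M" "x \<notin> M" by simp_all
  have "N = M" if "subgroup N G" "M \<subseteq> N" "x \<notin> N" for N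
  proof -
    have "V \<subseteq> N" using M(2) that(2) by (rule subset_trans)
    then have "N \<in> ?\<A>" using that by simp
    then show ?thesis using bspec[OF max] that(2) by simp
  qed
  with closedin_subgroup_containing_open[OF V(1,2) M(1,2)] M(1,3) show ?thesis
    by (rule that)
qed

definition closed_supplements :: "'a set \<Rightarrow> 'a set set" where
  "closed_supplements A = {K. closedin T K \<and> subgroup K G \<and> A <#> K = carrier G}"

lemma common_factor_of_closed_supplement_chain:
  assumes A: "closedin T A" and "\<K> \<noteq> {}" and chain: "subset.chain (closed_supplements A) \<K>"
    and g: "g \<in> carrier G"
  obtains k where "k \<in> \<Inter>\<K>" "g \<otimes> inv k \<in> A"
proof -
  have K: "closedin T K" "A <#> K = carrier G" "K \<subseteq> carrier G" if "K \<in> \<K>" for K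
    using chain that closedin_subset[of T K] by (auto simp: subset_chain_def closed_supplements_def)
  define S where "S K = {k \<in> K. g \<otimes> inv k \<in> A}" for K
  have "closedin T (S K)" if "K \<in> \<K>" for K
  proof -
    have "continuous_map T T (\<lambda>k. g \<otimes> inv k)"
      using g by (intro continuous_map_mult continuous_map_inv continuous_map_id[unfolded id_def]) simp_all
    from closedin_continuous_map_preimage[OF this A] have "closedin T {k \<in> carrier G. g \<otimes> inv k \<in> A}"
      by simp
    moreover have "S K = K \<inter> {k \<in> carrier G. g \<otimes> inv k \<in> A}"
      using K(3)[OF that] by (auto simp: S_def)
    ultimately show ?thesis using K(1)[OF that] by (simp add: closedin_Int)
  qed
  moreover have "\<Inter>\<F> \<noteq> {}" if \<F>: "finite \<F>" "\<F> \<subseteq> S ` \<K>" for \<F>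
  proof -
    obtain \<K>' where \<K>': "\<K>' \<subseteq> \<K>" "finite \<K>'" "\<F> = S ` \<K>'"
      using finite_subset_image[OF \<F>] by blast
    show ?thesis
    proof (cases "\<K>' = {}")
      case False
      have "K \<subseteq> K' \<or> K' \<subseteq> K" if "K \<in> \<K>" "K' \<in> \<K>" for K K'
        using chain that unfolding subset_chain_def by blast
      then have "subset.chain \<K> \<K>'"
        using \<K>'(1) unfolding subset_chain_def by blast
      then have "\<Inter>\<K>' \<in> \<K>'" using Inter_in_chain \<K>'(2) False by blast
      then have "g \<in> A <#> \<Inter>\<K>'" using K(2) \<K>'(1) g by blast
      then obtain a k where ak: "a \<in> A" "k \<in> \<Inter>\<K>'" "g = a \<otimes> k"
        unfolding mem_set_mult_iff by blast
      have "\<Inter>\<K>' \<in> \<K>" using \<open>\<Inter>\<K>' \<in> \<K>'\<close> \<K>'(1) by blast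
      then have "k \<in> carrier G" using K(3) ak(2) by blast
      moreover have "a \<in> carrier G" using closedin_subset[OF A] ak(1) by auto
      ultimately have "g \<otimes> inv k = a" using ak(3) by (simp add: m_assoc)
      then have "k \<in> \<Inter>\<F>" unfolding \<K>'(3) S_def using ak(1,2) by blast
      then show ?thesis by blast
    qed (use \<K>'(3) in auto)
  qed
  ultimately have "\<Inter>(S ` \<K>) \<noteq> {}"
    using compact_space_fip[THEN iffD1, OF compact_space, THEN spec, of "S ` \<K>"] by blast
  then obtain k where k: "k \<in> \<Inter>(S ` \<K>)" by blast
  then have "k \<in> \<Inter>\<K>" by (auto simp: S_def)
  moreover obtain K0 where "K0 \<in> \<K>" using \<open>\<K> \<noteq> {}\<close> by blast
  then have "g \<otimes> inv k \<in> A" using k by (auto simp: S_def)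
  ultimately show ?thesis by (rule that)
qed

lemma exists_minimal_closed_supplement:
  assumes A: "closedin T A" "subgroup A G"
  obtains K where "K \<in> closed_supplements A"
    "\<And>K'. K' \<in> closed_supplements A \<Longrightarrow> K' \<subseteq> K \<Longrightarrow> K' = K"
proof -
  have Ac: "A \<subseteq> carrier G" using subgroup.subset[OF A(2)] .
  have "A <#> carrier G = carrier G"
  proof
    show "A <#> carrier G \<subseteq> carrier G" using Ac by (rule set_mult_closed) simp
    have "g = \<one> \<otimes> g" if "g \<in> carrier G" for g using that by simp
    then show "carrier G \<subseteq> A <#> carrier G"
      using subgroup.one_closed[OF A(2)] unfolding subset_iff mem_set_mult_iff by blast
  qed
  then have "carrier G \<in> closed_supplements A"
    using closedin_topspace[of T] by (simp add: closed_supplements_def subgroup_self)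
  moreover have "\<Inter>\<K> \<in> closed_supplements A"
    if \<K>: "\<K> \<noteq> {}" "subset.chain (closed_supplements A) \<K>" for \<K>
  proof -
    have K: "closedin T K" "subgroup K G" if "K \<in> \<K>" for K
      using \<K>(2) that by (auto simp: subset_chain_def closed_supplements_def)
    obtain K0 where "K0 \<in> \<K>" using \<K>(1) by blast
    then have "\<Inter>\<K> \<subseteq> carrier G" using subgroup.subset[OF K(2)] by blast
    have "carrier G \<subseteq> A <#> \<Inter>\<K>"
    proof
      fix g assume g: "g \<in> carrier G"
      obtain k where k: "k \<in> \<Inter>\<K>" "g \<otimes> inv k \<in> A"
        using common_factor_of_closed_supplement_chain[OF A(1) \<K> g] by blast
      have "k \<in> carrier G" using k(1) \<open>\<Inter>\<K> \<subseteq> carrier G\<close> by blast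
      then have "g = (g \<otimes> inv k) \<otimes> k" using g by (simp add: m_assoc)
      then show "g \<in> A <#> \<Inter>\<K>" using k unfolding mem_set_mult_iff by blast
    qed
    then have "A <#> \<Inter>\<K> = carrier G"
      using set_mult_closed[OF Ac \<open>\<Inter>\<K> \<subseteq> carrier G\<close>] by blast
    moreover have "closedin T (\<Inter>\<K>)" using \<K>(1) K(1) by (intro closedin_Inter) auto
    moreover have "subgroup (\<Inter>\<K>) G" using \<K>(1) K(2) by (intro subgroups_Inter) auto
    ultimately show ?thesis by (simp add: closed_supplements_def)
  qed
  ultimately obtain K where "K \<in> closed_supplements A"
    "\<forall>K'\<in>closed_supplements A. K' \<subseteq> K \<longrightarrow> K' = K"
    using subset_Zorn_dual[of "closed_supplements A"] by blast
  then show ?thesis using that by blast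
qed

end

section \<open>Abelian profinite C-groups\<close>

locale abelian_profinite = profinite + comm_group G
begin

lemma factor_mult_closure_others_eq_carrier:
  assumes icp: "internal_cartesian_product G T I H" and i: "i \<in> I" "finite (H i)"
  shows "H i <#> T closure_of generate G (\<Union>j\<in>I - {i}. H j) = carrier G"
proof -
  let ?N = "T closure_of generate G (\<Union>j\<in>I - {i}. H j)"
  have H: "subgroup (H j) G" if "j \<in> I" for j
    using icp that unfolding internal_cartesian_product_def by (auto intro: normal_imp_subgroup)
  have "(\<Union>j\<in>I - {i}. H j) \<subseteq> carrier G" using subgroup.subset[OF H] by blast
  then have gen: "subgroup (generate G (\<Union>j\<in>I - {i}. H j)) G" by (rule generate_is_subgroup)
  then have N: "subgroup ?N G" by (rule subgroup_closure_of)
  have P: "subgroup (H i <#> ?N) G" by (rule mult_subgroups[OF H[OF i(1)] N])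
  have "closedin T (H i <#> ?N)"
    by (rule closedin_set_mult_finite[OF i(2) subgroup.subset[OF H[OF i(1)]] closedin_closure_of])
  moreover have "(\<Union>j\<in>I. H j) \<subseteq> H i <#> ?N"
  proof
    fix x assume "x \<in> (\<Union>j\<in>I. H j)"
    then obtain j where j: "j \<in> I" "x \<in> H j" by blast
    have x: "x \<in> carrier G" using subgroup.mem_carrier[OF H[OF j(1)] j(2)] .
    show "x \<in> H i <#> ?N"
    proof (cases "j = i")
      case True
      have "x = x \<otimes> \<one>" using x by simp
      then show ?thesis
        using j True subgroup.one_closed[OF N] unfolding mem_set_mult_iff by blast
    next
      case False
      then have "x \<in> (\<Union>j\<in>I - {i}. H j)" using j by blast
      then have "x \<in> generate G (\<Union>j\<in>I - {i}. H j)" by (rule generate.incl)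
      then have "x \<in> ?N"
        using closure_of_subset[of "generate G (\<Union>j\<in>I - {i}. H j)" T] subgroup.subset[OF gen]
        by auto
      moreover have "x = \<one> \<otimes> x" using x by simp
      ultimately show ?thesis
        using subgroup.one_closed[OF H[OF i(1)]] unfolding mem_set_mult_iff by blast
    qed
  qed
  then have "generate G (\<Union>j\<in>I. H j) \<subseteq> H i <#> ?N"
    by (rule generate_subgroup_incl[OF _ P])
  ultimately have "T closure_of generate G (\<Union>j\<in>I. H j) \<subseteq> H i <#> ?N"
    by (intro closure_of_minimal)
  moreover have "T closure_of generate G (\<Union>j\<in>I. H j) = carrier G"
    using icp by (simp add: internal_cartesian_product_def)
  ultimately show ?thesis using subgroup.subset[OF P] by simp
qed

lemma closed_supplement_Int:
  assumes A: "subgroup A G" and K: "K \<in> closed_supplements A"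
    and N: "closedin T N" "subgroup N G" and HN: "generate G {h} <#> N = carrier G"
    and a: "a \<in> A" "a \<in> K" "a = h \<otimes> n" "n \<in> N" and h: "h \<in> carrier G"
  shows "K \<inter> N \<in> closed_supplements A"
proof -
  have K': "closedin T K" "subgroup K G" "A <#> K = carrier G"
    using K by (auto simp: closed_supplements_def)
  have ac: "a \<in> carrier G" using subgroup.mem_carrier[OF A a(1)] .
  have nc: "n \<in> carrier G" using subgroup.mem_carrier[OF N(2) a(4)] .
  have "carrier G \<subseteq> A <#> (K \<inter> N)"
  proof
    fix g assume "g \<in> carrier G"
    then have "g \<in> A <#> K" using K'(3) by simp
    then obtain a' k where ak: "a' \<in> A" "k \<in> K" "g = a' \<otimes> k"
      unfolding mem_set_mult_iff by blast
    have a'c: "a' \<in> carrier G" using subgroup.mem_carrier[OF A ak(1)] .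
    have kc: "k \<in> carrier G" using subgroup.mem_carrier[OF K'(2) ak(2)] .
    then have "k \<in> generate G {h} <#> N" using HN by simp
    then obtain h' n' where hn: "h' \<in> generate G {h}" "n' \<in> N" "k = h' \<otimes> n'"
      unfolding mem_set_mult_iff by blast
    then obtain j :: int where j: "h' = h [^] j" using generate_pow[OF h] by blast
    have n'c: "n' \<in> carrier G" using subgroup.mem_carrier[OF N(2) hn(2)] .
    \<comment> \<open>\<open>a [^] j = h [^] j \<otimes> n [^] j\<close> has the same \<open>generate G {h}\<close>-component as \<open>k\<close>\<close>
    define k' where "k' = inv (a [^] j) \<otimes> k"
    have "a [^] j \<in> K" using subgroup_int_pow_closed[OF K'(2) a(2)] .
    then have "k' \<in> K"
      unfolding k'_def using K'(2) ak(2) by (simp add: subgroup.m_closed subgroup.m_inv_closed)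
    moreover have "k' = inv (n [^] j) \<otimes> n'"
      unfolding k'_def using a(3) hn(3) j h nc n'c by (simp add: int_pow_distrib inv_mult_group m_assoc)
    moreover have "n [^] j \<in> N" using subgroup_int_pow_closed[OF N(2) a(4)] .
    ultimately have "k' \<in> K \<inter> N"
      using N(2) hn(2) by (simp add: subgroup.m_closed subgroup.m_inv_closed)
    moreover have "a' \<otimes> a [^] j \<in> A"
      using subgroup.m_closed[OF A ak(1) subgroup_int_pow_closed[OF A a(1)]] .
    moreover have "g = (a' \<otimes> a [^] j) \<otimes> k'"
      unfolding k'_def using ak(3) kc a'c ac by (simp add: m_assoc)
    ultimately show "g \<in> A <#> (K \<inter> N)" unfolding mem_set_mult_iff by blast
  qed
  moreover have "A <#> (K \<inter> N) \<subseteq> carrier G"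
    using subgroup.subset[OF A] subgroup.subset[OF K'(2)] by (intro set_mult_closed) auto
  moreover have "closedin T (K \<inter> N)" using K'(1) N(1) by (rule closedin_Int)
  moreover have "subgroup (K \<inter> N) G" using K'(2) N(2) by (rule subgroups_Inter_pair)
  ultimately show ?thesis by (auto simp: closed_supplements_def)
qed

lemma exists_cyclic_supplement_avoiding:
  assumes icp: "internal_cartesian_product G T I H"
    and prime: "\<forall>i\<in>I. Factorial_Ring.prime (card (H i))"
    and a: "a \<in> carrier G" "a \<noteq> \<one>"
  obtains h n N where "closedin T N" "subgroup N G" "generate G {h} <#> N = carrier G"
    "h \<in> carrier G" "n \<in> N" "a = h \<otimes> n" "a \<notin> N"
proof -
  define N where "N i = T closure_of generate G (\<Union>j\<in>I - {i}. H j)" for i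
  have "carrier G \<inter> (\<Inter>i\<in>I. N i) = {\<one>}"
    using icp by (simp add: internal_cartesian_product_def N_def)
  then have "a \<notin> (\<Inter>i\<in>I. N i)" using a by blast
  then obtain i where i: "i \<in> I" "a \<notin> N i" by blast
  have Hi: "subgroup (H i) G"
    using icp i(1) unfolding internal_cartesian_product_def by (auto intro: normal_imp_subgroup)
  have "Factorial_Ring.prime (card (H i))" using prime i(1) by blast
  then have "finite (H i)" by (metis card.infinite not_prime_0)
  have "(\<Union>j\<in>I - {i}. H j) \<subseteq> carrier G"
    using icp unfolding internal_cartesian_product_def by (auto dest: normal_imp_subgroup subgroup.mem_carrier)
  then have N: "closedin T (N i)" "subgroup (N i) G"
    unfolding N_def by (simp_all add: subgroup_closure_of generate_is_subgroup)
  have HN: "H i <#> N i = carrier G"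
    using factor_mult_closure_others_eq_carrier[OF icp i(1) \<open>finite (H i)\<close>] by (simp add: N_def)
  then have "a \<in> H i <#> N i" using a(1) by simp
  then obtain h n where hn: "h \<in> H i" "n \<in> N i" "a = h \<otimes> n"
    unfolding mem_set_mult_iff by blast
  have "h \<noteq> \<one>"
  proof
    assume "h = \<one>"
    then have "a = n" using hn(3) subgroup.mem_carrier[OF N(2) hn(2)] by simp
    then show False using hn(2) i(2) by simp
  qed
  then have "generate G {h} = H i"
    using prime_card_subgroup_eq_generate[OF Hi \<open>Factorial_Ring.prime (card (H i))\<close> hn(1)] by blast
  with N HN subgroup.mem_carrier[OF Hi hn(1)] hn(2,3) i(2) show ?thesis
    by (intro that) simp_all
qed

lemma minimal_closed_supplement_is_complement:
  assumes icp: "internal_cartesian_product G T I H"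
    and prime: "\<forall>i\<in>I. Factorial_Ring.prime (card (H i))"
    and A: "subgroup A G" and K: "K \<in> closed_supplements A"
    and min: "\<And>K'. K' \<in> closed_supplements A \<Longrightarrow> K' \<subseteq> K \<Longrightarrow> K' = K"
  shows "A \<inter> K = {\<one>}"
proof (rule ccontr)
  have Ksg: "subgroup K G" using K by (simp add: closed_supplements_def)
  have "\<one> \<in> A \<inter> K" using subgroup.one_closed[OF A] subgroup.one_closed[OF Ksg] by simp
  moreover assume "A \<inter> K \<noteq> {\<one>}"
  ultimately obtain a where a: "a \<in> A" "a \<in> K" "a \<noteq> \<one>" by blast
  obtain h n N where N: "closedin T N" "subgroup N G" and hN: "generate G {h} <#> N = carrier G"
    and "h \<in> carrier G" "n \<in> N" "a = h \<otimes> n" "a \<notin> N"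
    using exists_cyclic_supplement_avoiding[OF icp prime subgroup.mem_carrier[OF A a(1)] a(3)] .
  then have "K \<inter> N \<in> closed_supplements A"
    using closed_supplement_Int[OF A K N hN a(1,2)] by blast
  then have "K \<inter> N = K" using min by blast
  then show False using a(2) \<open>a \<notin> N\<close> by blast
qed

lemma profinite_C_group_if_internal_cartesian_product:
  assumes "internal_cartesian_product G T I H" "\<forall>i\<in>I. Factorial_Ring.prime (card (H i))"
  shows "profinite_C_group G T"
  unfolding profinite_C_group_def
proof (intro conjI allI impI)
  show "profinite_group G T" by (rule profinite_group)
  fix A assume A: "subgroup A G \<and> closedin T A"
  then obtain K where K: "K \<in> closed_supplements A"
    and min: "\<And>K'. K' \<in> closed_supplements A \<Longrightarrow> K' \<subseteq> K \<Longrightarrow> K' = K"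
    using exists_minimal_closed_supplement by blast
  have "A \<inter> K = {\<one>}"
    using minimal_closed_supplement_is_complement[OF assms _ K min] A by blast
  then show "\<exists>K. closedin T K \<and> permutable_complement G A K"
    using K by (auto simp: closed_supplements_def permutable_complement_def)
qed

lemma prime_cyclic_if_in_all_cyclic_subgroups:
  assumes C: "profinite_C_group G T" and Z: "subgroup Z G" and z: "z \<in> Z" "z \<noteq> \<one>"
    and gen: "\<And>w. w \<in> Z \<Longrightarrow> w \<noteq> \<one> \<Longrightarrow> z \<in> generate G {w}"
  shows "Z = generate G {z}" "Factorial_Ring.prime (card Z)"
proof -
  have zc: "z \<in> carrier G" using subgroup.mem_carrier[OF Z z(1)] .
  have XZ: "generate G {z} \<subseteq> Z" using generate_subgroup_incl[OF _ Z] z(1) by simp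
  have X: "subgroup (generate G {z}) G" using generate_is_subgroup zc by simp
  have "Factorial_Ring.prime (ord z)"
  proof (rule prime_ord_if_generated_by_all_powers[OF zc z(2)])
    fix w assume "w \<in> generate G {z}" "w \<noteq> \<one>"
    then show "z \<in> generate G {w}" using gen XZ by blast
  qed
  then have prime: "Factorial_Ring.prime (card (generate G {z}))"
    using generate_pow_card[OF zc] by simp
  have "finite (generate G {z})"
  proof (rule ccontr)
    assume "infinite (generate G {z})"
    then show False using prime by simp
  qed
  then have "closedin T (generate G {z})"
    using closedin_Hausdorff_finite[OF Hausdorff_space] subgroup.subset[OF X] by simp
  then obtain Y where "permutable_complement G (generate G {z}) Y"
    using C X unfolding profinite_C_group_def by blast
  then have Y: "subgroup Y G" "generate G {z} <#> Y = carrier G" "generate G {z} \<inter> Y = {\<one>}"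
    by (auto simp: permutable_complement_def)
  have "w = \<one>" if w: "w \<in> Z" "w \<in> Y" for w
  proof (rule ccontr)
    assume "w \<noteq> \<one>"
    then have "z \<in> generate G {w}" using gen w(1) by blast
    moreover have "generate G {w} \<subseteq> Y" using generate_subgroup_incl[OF _ Y(1)] w(2) by simp
    ultimately have "z \<in> generate G {z} \<inter> Y" using generate.incl[of z "{z}" G] by blast
    then show False using Y(3) z(2) by blast
  qed
  then have "Z \<inter> Y = {\<one>}" using subgroup.one_closed[OF Z] subgroup.one_closed[OF Y(1)] by blast
  then show "Z = generate G {z}"
    by (rule subgroup_eq_if_Int_supplement_trivial[OF X Z XZ Y(1) Y(2)])
  with prime show "Factorial_Ring.prime (card Z)" by simp
qed

definition prime_complemented :: "'a set \<Rightarrow> bool" where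
  "prime_complemented M \<longleftrightarrow> closedin T M \<and> subgroup M G \<and>
     (\<exists>Z. subgroup Z G \<and> Factorial_Ring.prime (card Z) \<and> M \<inter> Z = {\<one>} \<and> M <#> Z = carrier G)"

lemma prime_complemented_if_maximal_avoiding:
  assumes C: "profinite_C_group G T"
    and M: "closedin T M" "subgroup M G" "x \<notin> M"
    and max: "\<And>N. subgroup N G \<Longrightarrow> M \<subseteq> N \<Longrightarrow> x \<notin> N \<Longrightarrow> N = M"
    and x: "x \<in> carrier G"
  shows "prime_complemented M"
proof -
  obtain Z where "permutable_complement G M Z"
    using C M(1,2) unfolding profinite_C_group_def by blast
  then have Z: "subgroup Z G" "M <#> Z = carrier G" "M \<inter> Z = {\<one>}"
    by (auto simp: permutable_complement_def)
  have "x \<in> M <#> Z" using x Z(2) by simp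
  then obtain m z where mz: "m \<in> M" "z \<in> Z" "x = m \<otimes> z" unfolding mem_set_mult_iff by blast
  have "z \<noteq> \<one>"
  proof
    assume "z = \<one>"
    then have "x = m" using mz(3) subgroup.mem_carrier[OF M(2) mz(1)] by simp
    then show False using mz(1) M(3) by simp
  qed
  have "z \<in> generate G {w}" if "w \<in> Z" "w \<noteq> \<one>" for w
    using mem_generate_if_maximal_avoiding[OF M(2) max Z(1) Z(3) mz(3,1,2) that] .
  then have "Factorial_Ring.prime (card Z)"
    using prime_cyclic_if_in_all_cyclic_subgroups(2)[OF C Z(1) mz(2) \<open>z \<noteq> \<one>\<close>] by blast
  then show ?thesis unfolding prime_complemented_def using M(1,2) Z by blast
qed

lemma exists_prime_complemented_avoiding:
  assumes C: "profinite_C_group G T" and x: "x \<in> carrier G" "x \<noteq> \<one>"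
  obtains M where "prime_complemented M" "x \<notin> M"
proof -
  obtain M where M: "closedin T M" "subgroup M G" "x \<notin> M"
    and max: "\<And>N. subgroup N G \<Longrightarrow> M \<subseteq> N \<Longrightarrow> x \<notin> N \<Longrightarrow> N = M"
    using exists_closed_maximal_subgroup_avoiding[OF x] by blast
  have "prime_complemented M"
    using prime_complemented_if_maximal_avoiding[OF C M max x(1)] .
  then show ?thesis using M(3) by (rule that)
qed

lemma prime_complemented_supplement:
  assumes M: "prime_complemented M" and N: "subgroup N G" "\<not> N \<subseteq> M"
  shows "N <#> M = carrier G"
proof -
  obtain Z where "subgroup Z G" "Factorial_Ring.prime (card Z)" "M \<inter> Z = {\<one>}" "M <#> Z = carrier G"
    using M unfolding prime_complemented_def by blast
  moreover have "subgroup M G" using M unfolding prime_complemented_def by blast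
  ultimately show ?thesis using set_mult_eq_carrier_if_prime_complement N by blast
qed

lemma closedin_carrier_diff_prime_complemented:
  assumes "prime_complemented M"
  shows "closedin T (carrier G - M)"
proof -
  obtain Z where Z: "subgroup Z G" "Factorial_Ring.prime (card Z)" "M \<inter> Z = {\<one>}" "M <#> Z = carrier G"
    and M: "closedin T M" "subgroup M G"
    using assms unfolding prime_complemented_def by blast
  have "finite Z"
  proof (rule ccontr)
    assume "infinite Z"
    then show False using Z(2) by simp
  qed
  have "carrier G - M = (Z - {\<one>}) <#> M"
  proof (intro equalityI subsetI)
    fix y assume y: "y \<in> carrier G - M"
    then have "y \<in> M <#> Z" using Z(4) by simp
    then obtain m z where mz: "m \<in> M" "z \<in> Z" "y = m \<otimes> z" unfolding mem_set_mult_iff by blast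
    have c: "m \<in> carrier G" "z \<in> carrier G"
      using subgroup.mem_carrier[OF M(2) mz(1)] subgroup.mem_carrier[OF Z(1) mz(2)] by simp_all
    have "z \<noteq> \<one>" using y mz c by auto
    moreover have "y = z \<otimes> m" using mz(3) c m_comm by simp
    ultimately show "y \<in> (Z - {\<one>}) <#> M" using mz(1,2) unfolding mem_set_mult_iff by blast
  next
    fix y assume "y \<in> (Z - {\<one>}) <#> M"
    then obtain z m where zm: "z \<in> Z" "z \<noteq> \<one>" "m \<in> M" "y = z \<otimes> m"
      unfolding mem_set_mult_iff by blast
    have c: "m \<in> carrier G" "z \<in> carrier G"
      using subgroup.mem_carrier[OF M(2) zm(3)] subgroup.mem_carrier[OF Z(1) zm(1)] by simp_all
    have "y \<notin> M"
    proof
      assume "y \<in> M"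
      then have "y \<otimes> inv m \<in> M"
        using subgroup.m_closed[OF M(2)] subgroup.m_inv_closed[OF M(2) zm(3)] by simp
      moreover have "y \<otimes> inv m = z" using zm(4) c by (simp add: m_assoc)
      ultimately have "z \<in> M \<inter> Z" using zm(1) by simp
      then show False using Z(3) zm(2) by simp
    qed
    then show "y \<in> carrier G - M" using c zm(4) by simp
  qed
  moreover have "closedin T ((Z - {\<one>}) <#> M)"
    using \<open>finite Z\<close> subgroup.subset[OF Z(1)] M(1) by (intro closedin_set_mult_finite) auto
  ultimately show ?thesis by simp
qed

definition Inter_others :: "'a set set \<Rightarrow> 'a set \<Rightarrow> 'a set" where
  "Inter_others \<M> M = carrier G \<inter> \<Inter>(\<M> - {M})"

definition independent_family :: "'a set set \<Rightarrow> bool" where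
  "independent_family \<M> \<longleftrightarrow> (\<forall>M\<in>\<M>. prime_complemented M \<and> \<not> Inter_others \<M> M \<subseteq> M)"

lemma subgroup_Inter_others:
  assumes "\<And>M. M \<in> \<M> \<Longrightarrow> subgroup M G"
  shows "subgroup (Inter_others \<M> M) G"
proof -
  have "Inter_others \<M> M = \<Inter>(insert (carrier G) (\<M> - {M}))"
    by (simp add: Inter_others_def)
  moreover have "subgroup (\<Inter>(insert (carrier G) (\<M> - {M}))) G"
    using assms subgroup_self by (intro subgroups_Inter) auto
  ultimately show ?thesis by simp
qed

lemma closedin_Inter_others:
  assumes "\<And>M. M \<in> \<M> \<Longrightarrow> closedin T M"
  shows "closedin T (Inter_others \<M> M)"
proof -
  have "Inter_others \<M> M = \<Inter>(insert (carrier G) (\<M> - {M}))"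
    by (simp add: Inter_others_def)
  moreover have "closedin T (\<Inter>(insert (carrier G) (\<M> - {M})))"
    using assms closedin_topspace[of T] by (intro closedin_Inter) auto
  ultimately show ?thesis by simp
qed

lemma independent_family_Union_chain:
  assumes chain: "subset.chain (Collect independent_family) \<C>"
  shows "independent_family (\<Union>\<C>)"
proof -
  have pc: "prime_complemented M" if M: "M \<in> \<Union>\<C>" for M
  proof -
    obtain \<M> where "\<M> \<in> \<C>" "M \<in> \<M>" using M by blast
    moreover have "independent_family \<M>" using chain \<open>\<M> \<in> \<C>\<close> by (auto simp: subset_chain_def)
    ultimately show ?thesis by (simp add: independent_family_def)
  qed
  have "\<not> Inter_others (\<Union>\<C>) M \<subseteq> M" if M: "M \<in> \<Union>\<C>" for M
  proof -
    define \<U> where "\<U> = insert (carrier G - M) (\<Union>\<C> - {M})"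
    have "closedin T C" if "C \<in> \<U>" for C
      using that closedin_carrier_diff_prime_complemented[OF pc[OF M]] pc
      unfolding \<U>_def prime_complemented_def by blast
    moreover have "\<Inter>\<F> \<noteq> {}" if \<F>: "finite \<F>" "\<F> \<subseteq> \<U>" for \<F>
    proof -
      let ?\<F>' = "insert M (\<F> - {carrier G - M})"
      have "finite ?\<F>'" "?\<F>' \<subseteq> \<Union>\<C>" using \<F> M unfolding \<U>_def by auto
      moreover have "\<C> \<noteq> {}" using M by blast
      ultimately obtain \<M> where "\<M> \<in> \<C>" "?\<F>' \<subseteq> \<M>"
        using finite_subset_Union_chain[OF _ _ _ chain] by blast
      moreover have "independent_family \<M>" using chain \<open>\<M> \<in> \<C>\<close> by (auto simp: subset_chain_def)
      ultimately obtain q where q: "q \<in> Inter_others \<M> M" "q \<notin> M"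
        unfolding independent_family_def by blast
      have "q \<in> S" if "S \<in> \<F>" for S
      proof (cases "S = carrier G - M")
        case True
        then show ?thesis using q by (simp add: Inter_others_def)
      next
        case False
        then have "S \<in> \<M> - {M}" using that \<F>(2) \<open>?\<F>' \<subseteq> \<M>\<close> unfolding \<U>_def by blast
        then show ?thesis using q(1) by (auto simp: Inter_others_def)
      qed
      then show ?thesis by blast
    qed
    ultimately have "\<Inter>\<U> \<noteq> {}"
      using compact_space_fip[THEN iffD1, OF compact_space, THEN spec, of \<U>] by blast
    then obtain q where "q \<in> \<Inter>\<U>" by blast
    then have "q \<in> Inter_others (\<Union>\<C>) M" "q \<notin> M"
      unfolding \<U>_def Inter_others_def by auto
    then show ?thesis by blast
  qed
  with pc show ?thesis by (simp add: independent_family_def)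
qed

lemma Inter_others_insert_not_subset:
  assumes \<M>: "independent_family \<M>" and M: "M \<in> \<M>" and M': "subgroup M' G"
    and NM': "(carrier G \<inter> \<Inter>\<M>) <#> M' = carrier G"
  shows "\<not> Inter_others (insert M' \<M>) M \<subseteq> M"
proof -
  have sg: "subgroup M'' G" if "M'' \<in> \<M>" for M''
    using \<M> that unfolding independent_family_def prime_complemented_def by blast
  obtain q where q: "q \<in> Inter_others \<M> M" "q \<notin> M"
    using \<M> M unfolding independent_family_def by blast
  then have "q \<in> (carrier G \<inter> \<Inter>\<M>) <#> M'" using NM' by (simp add: Inter_others_def)
  then obtain n m' where nm: "n \<in> carrier G \<inter> \<Inter>\<M>" "m' \<in> M'" "q = n \<otimes> m'"
    unfolding mem_set_mult_iff by blast
  have nc: "n \<in> carrier G" using nm(1) by blast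
  have m'c: "m' \<in> carrier G" using M' nm(2) by (rule subgroup.mem_carrier)
  have m': "m' = inv n \<otimes> q" using nm(3) nc m'c by simp
  have "m' \<notin> M"
  proof
    assume "m' \<in> M"
    moreover have "n \<in> M" using nm(1) M by blast
    ultimately have "n \<otimes> m' \<in> M" using subgroup.m_closed[OF sg[OF M]] by simp
    then show False using nm(3) q(2) by simp
  qed
  moreover have "m' \<in> M''" if "M'' \<in> insert M' \<M> - {M}" for M''
  proof (cases "M'' = M'")
    case True
    then show ?thesis using nm(2) by simp
  next
    case False
    then have "M'' \<in> \<M> - {M}" using that by blast
    then have "n \<in> M''" "q \<in> M''" using nm(1) q(1) by (auto simp: Inter_others_def)
    then show ?thesis
      using m' subgroup.m_closed[OF sg] subgroup.m_inv_closed[OF sg] \<open>M'' \<in> \<M> - {M}\<close> by simp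
  qed
  ultimately have "m' \<in> Inter_others (insert M' \<M>) M" "m' \<notin> M"
    using m'c by (auto simp: Inter_others_def)
  then show ?thesis by blast
qed

lemma independent_family_insert:
  assumes \<M>: "independent_family \<M>" and M': "prime_complemented M'"
    and x: "x \<in> carrier G \<inter> \<Inter>\<M>" "x \<notin> M'"
  shows "independent_family (insert M' \<M>)"
proof -
  let ?N = "carrier G \<inter> \<Inter>\<M>"
  have "subgroup (\<Inter>(insert (carrier G) \<M>)) G"
    using \<M> subgroup_self unfolding independent_family_def prime_complemented_def
    by (intro subgroups_Inter) auto
  then have N: "subgroup ?N G" by simp
  have "\<not> ?N \<subseteq> M'" using x by blast
  then have NM': "?N <#> M' = carrier G" by (rule prime_complemented_supplement[OF M' N])
  have sg': "subgroup M' G" using M' unfolding prime_complemented_def by blast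
  have "\<not> Inter_others (insert M' \<M>) M \<subseteq> M" if M: "M \<in> insert M' \<M>" for M
  proof (cases "M = M'")
    case True
    moreover have "M' \<notin> \<M>" using x by blast
    ultimately have "Inter_others (insert M' \<M>) M = ?N" by (auto simp: Inter_others_def)
    then show ?thesis using x \<open>M = M'\<close> by blast
  next
    case False
    then show ?thesis using Inter_others_insert_not_subset[OF \<M> _ sg' NM'] M by blast
  qed
  moreover have "prime_complemented M" if "M \<in> insert M' \<M>" for M
    using that M' \<M> unfolding independent_family_def by blast
  ultimately show ?thesis unfolding independent_family_def by blast
qed

lemma exists_independent_family_Inter_trivial:
  assumes C: "profinite_C_group G T"
  obtains \<M> where "independent_family \<M>" "carrier G \<inter> \<Inter>\<M> = {\<one>}"
proof -
  have "\<exists>\<M>\<in>Collect independent_family. \<forall>\<N>\<in>Collect independent_family. \<M> \<subseteq> \<N> \<longrightarrow> \<N> = \<M>"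
    using independent_family_Union_chain by (intro subset_Zorn') simp
  then obtain \<M> where \<M>: "independent_family \<M>"
    and max: "\<forall>\<N>\<in>Collect independent_family. \<M> \<subseteq> \<N> \<longrightarrow> \<N> = \<M>" by blast
  have "x = \<one>" if x: "x \<in> carrier G \<inter> \<Inter>\<M>" for x
  proof (rule ccontr)
    assume "x \<noteq> \<one>"
    then obtain M' where M': "prime_complemented M'" "x \<notin> M'"
      using exists_prime_complemented_avoiding[OF C] x by blast
    then have "independent_family (insert M' \<M>)"
      using independent_family_insert[OF \<M> _ x] by blast
    then have "insert M' \<M> = \<M>" using max by blast
    then show False using x M'(2) by blast
  qed
  moreover have "\<one> \<in> carrier G \<inter> \<Inter>\<M>"
    using \<M> subgroup.one_closed unfolding independent_family_def prime_complemented_def by blast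
  ultimately have "carrier G \<inter> \<Inter>\<M> = {\<one>}" by blast
  with \<M> show ?thesis by (rule that)
qed

lemma prime_card_Inter_others:
  assumes \<M>: "independent_family \<M>" and triv: "carrier G \<inter> \<Inter>\<M> = {\<one>}" and "M \<in> \<M>"
  shows "Factorial_Ring.prime (card (Inter_others \<M> M))"
proof -
  let ?P = "Inter_others \<M> M"
  have pc: "prime_complemented M" and "\<not> ?P \<subseteq> M"
    using \<M> \<open>M \<in> \<M>\<close> unfolding independent_family_def by blast+
  then obtain Z where Z: "subgroup Z G" "Factorial_Ring.prime (card Z)" "M \<inter> Z = {\<one>}" "M <#> Z = carrier G"
    and M: "subgroup M G"
    unfolding prime_complemented_def by blast
  have P: "subgroup ?P G"
    using \<M> by (intro subgroup_Inter_others) (auto simp: independent_family_def prime_complemented_def)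
  have "?P \<inter> M \<subseteq> carrier G \<inter> \<Inter>\<M>" by (auto simp: Inter_others_def)
  then have PM: "?P \<inter> M = {\<one>}"
    using triv subgroup.one_closed[OF P] subgroup.one_closed[OF M] by blast
  have PMc: "?P <#> M = carrier G"
    using prime_complemented_supplement[OF pc P \<open>\<not> ?P \<subseteq> M\<close>] .
  have "finite Z"
  proof (rule ccontr)
    assume "infinite Z"
    then show False using Z(2) by simp
  qed
  have "Z <#> M = carrier G"
    using Z(4) set_mult_comm[OF subgroup.subset[OF M] subgroup.subset[OF Z(1)]] by simp
  then have "finite ?P \<and> card ?P \<le> card Z"
    using card_le_if_complement[OF P Z(1) M PM _ \<open>finite Z\<close>] by simp
  moreover have "Z \<inter> M = {\<one>}" using Z(3) by blast
  then have "card Z \<le> card ?P"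
    using card_le_if_complement[OF Z(1) P M _ _] PMc calculation by simp
  ultimately have "card ?P = card Z" by simp
  then show ?thesis using Z(2) by simp
qed

lemma carrier_subset_generate_mult_Inter:
  assumes \<M>: "independent_family \<M>" and "finite \<F>" "\<F> \<subseteq> \<M>"
  shows "carrier G \<subseteq> generate G (\<Union>M\<in>\<M>. Inter_others \<M> M) <#> (carrier G \<inter> \<Inter>\<F>)"
  using assms(2,3)
proof (induction \<F> rule: finite_induct)
  case empty
  have "g = \<one> \<otimes> g" if "g \<in> carrier G" for g using that by simp
  then show ?case using generate.one unfolding subset_iff mem_set_mult_iff by blast
next
  case (insert M \<F>)
  let ?gen = "generate G (\<Union>M\<in>\<M>. Inter_others \<M> M)"
  have M: "M \<in> \<M>" and "\<F> \<subseteq> \<M>" using insert.prems by auto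
  have pc: "prime_complemented M" and "\<not> Inter_others \<M> M \<subseteq> M"
    using \<M> M unfolding independent_family_def by blast+
  have sg: "subgroup M' G" if "M' \<in> \<M>" for M'
    using \<M> that unfolding independent_family_def prime_complemented_def by blast
  have P: "subgroup (Inter_others \<M> M) G" using sg by (rule subgroup_Inter_others)
  have PM: "Inter_others \<M> M <#> M = carrier G"
    using prime_complemented_supplement[OF pc P \<open>\<not> Inter_others \<M> M \<subseteq> M\<close>] .
  show ?case
  proof
    fix g assume "g \<in> carrier G"
    then have "g \<in> ?gen <#> (carrier G \<inter> \<Inter>\<F>)" using insert.IH[OF \<open>\<F> \<subseteq> \<M>\<close>] by blast
    then obtain \<gamma> y where \<gamma>y: "\<gamma> \<in> ?gen" "y \<in> carrier G \<inter> \<Inter>\<F>" "g = \<gamma> \<otimes> y"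
      unfolding mem_set_mult_iff by blast
    have "y \<in> Inter_others \<M> M <#> M" using PM \<gamma>y(2) by simp
    then obtain p m where pm: "p \<in> Inter_others \<M> M" "m \<in> M" "y = p \<otimes> m"
      unfolding mem_set_mult_iff by blast
    have c: "p \<in> carrier G" "m \<in> carrier G" "\<gamma> \<in> carrier G"
      using subgroup.mem_carrier[OF P pm(1)] subgroup.mem_carrier[OF sg[OF M] pm(2)]
        \<gamma>y(1) generate_incl[of "\<Union>M\<in>\<M>. Inter_others \<M> M"]
      by (auto simp: Inter_others_def)
    have "m \<in> M''" if "M'' \<in> \<F>" for M''
    proof -
      have "M'' \<in> \<M> - {M}" using that insert.hyps(2) \<open>\<F> \<subseteq> \<M>\<close> by blast
      then have "p \<in> M''" using pm(1) by (auto simp: Inter_others_def)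
      moreover have "y \<in> M''" using \<gamma>y(2) that by blast
      moreover have "m = inv p \<otimes> y" using pm(3) c by simp
      ultimately show ?thesis
        using subgroup.m_closed[OF sg] subgroup.m_inv_closed[OF sg] \<open>M'' \<in> \<M> - {M}\<close> by simp
    qed
    then have "m \<in> carrier G \<inter> \<Inter>(insert M \<F>)" using pm(2) c(2) by blast
    moreover have "\<gamma> \<otimes> p \<in> ?gen"
      using generate.eng[OF \<gamma>y(1) generate.incl[of p]] pm(1) M by blast
    moreover have "g = (\<gamma> \<otimes> p) \<otimes> m" using \<gamma>y(3) pm(3) c by (simp add: m_assoc)
    ultimately show "g \<in> ?gen <#> (carrier G \<inter> \<Inter>(insert M \<F>))"
      unfolding mem_set_mult_iff by blast
  qed
qed

lemma closure_generate_Inter_others: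
  assumes \<M>: "independent_family \<M>" and triv: "carrier G \<inter> \<Inter>\<M> = {\<one>}"
  shows "T closure_of generate G (\<Union>M\<in>\<M>. Inter_others \<M> M) = carrier G"
proof
  let ?gen = "generate G (\<Union>M\<in>\<M>. Inter_others \<M> M)"
  let ?L = "T closure_of ?gen"
  show "?L \<subseteq> carrier G" using closure_of_subset_topspace[of T ?gen] by simp
  have "?gen \<subseteq> carrier G"
    using generate_incl[of "\<Union>M\<in>\<M>. Inter_others \<M> M"] by (auto simp: Inter_others_def)
  then have gen_L: "?gen \<subseteq> ?L" using closure_of_subset[of ?gen T] by simp
  show "carrier G \<subseteq> ?L"
  proof
    fix g assume g: "g \<in> carrier G"
    define S0 where "S0 = {y \<in> topspace T. g \<otimes> inv y \<in> ?L}"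
    have "continuous_map T T (\<lambda>y. g \<otimes> inv y)"
      using g by (intro continuous_map_mult continuous_map_inv continuous_map_id[unfolded id_def]) simp_all
    then have "closedin T S0"
      unfolding S0_def by (rule closedin_continuous_map_preimage) simp
    moreover have "closedin T M" if "M \<in> \<M>" for M
      using \<M> that unfolding independent_family_def prime_complemented_def by blast
    ultimately have closed: "\<forall>C\<in>insert S0 \<M>. closedin T C" by blast
    have "\<Inter>\<F> \<noteq> {}" if \<F>: "finite \<F>" "\<F> \<subseteq> insert S0 \<M>" for \<F>
    proof -
      have "finite (\<F> - {S0})" "\<F> - {S0} \<subseteq> \<M>" using \<F> by auto
      then have "g \<in> ?gen <#> (carrier G \<inter> \<Inter>(\<F> - {S0}))"
        using carrier_subset_generate_mult_Inter[OF \<M>] g by blast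
      then obtain \<gamma> y where \<gamma>y: "\<gamma> \<in> ?gen" "y \<in> carrier G \<inter> \<Inter>(\<F> - {S0})" "g = \<gamma> \<otimes> y"
        unfolding mem_set_mult_iff by blast
      have "\<gamma> \<in> carrier G" using \<gamma>y(1) \<open>?gen \<subseteq> carrier G\<close> by blast
      then have "g \<otimes> inv y = \<gamma>" using \<gamma>y(2,3) by (simp add: m_assoc)
      then have "y \<in> S0" using \<gamma>y(1,2) gen_L by (auto simp: S0_def)
      then have "y \<in> \<Inter>\<F>" using \<gamma>y(2) by blast
      then show ?thesis by blast
    qed
    with closed have "\<Inter>(insert S0 \<M>) \<noteq> {}"
      using compact_space_fip[THEN iffD1, OF compact_space, THEN spec, of "insert S0 \<M>"] by blast
    then obtain y where y: "y \<in> S0" "y \<in> \<Inter>\<M>" by blast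
    then have "y = \<one>" using triv by (auto simp: S0_def)
    then show "g \<in> ?L" using y(1) g by (simp add: S0_def)
  qed
qed

lemma internal_cartesian_product_Inter_others:
  assumes \<M>: "independent_family \<M>" and triv: "carrier G \<inter> \<Inter>\<M> = {\<one>}"
  shows "internal_cartesian_product G T \<M> (Inter_others \<M>)"
proof -
  have sg: "subgroup M G" and cl: "closedin T M" if "M \<in> \<M>" for M
    using \<M> that unfolding independent_family_def prime_complemented_def by blast+
  let ?N = "\<lambda>M. T closure_of generate G (\<Union>M'\<in>\<M> - {M}. Inter_others \<M> M')"
  have "?N M \<subseteq> M" if "M \<in> \<M>" for M
  proof -
    have "(\<Union>M'\<in>\<M> - {M}. Inter_others \<M> M') \<subseteq> M" using that by (auto simp: Inter_others_def)
    then have "generate G (\<Union>M'\<in>\<M> - {M}. Inter_others \<M> M') \<subseteq> M"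
      using generate_subgroup_incl[OF _ sg[OF that]] by blast
    then show ?thesis using closure_of_minimal[OF _ cl[OF that]] by blast
  qed
  then have sub: "carrier G \<inter> (\<Inter>M\<in>\<M>. ?N M) \<subseteq> carrier G \<inter> \<Inter>\<M>" by blast
  have one: "\<one> \<in> ?N M" for M
  proof -
    have "(\<Union>M'\<in>\<M> - {M}. Inter_others \<M> M') \<subseteq> carrier G"
      by (auto simp: Inter_others_def)
    then have "generate G (\<Union>M'\<in>\<M> - {M}. Inter_others \<M> M') \<subseteq> carrier G"
      by (rule generate_incl)
    then have "generate G (\<Union>M'\<in>\<M> - {M}. Inter_others \<M> M') \<subseteq> ?N M"
      using closure_of_subset[of _ T] by simp
    then show ?thesis using generate.one[of G] by blast
  qed
  have eq: "carrier G \<inter> (\<Inter>M\<in>\<M>. ?N M) = {\<one>}"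
  proof
    show "carrier G \<inter> (\<Inter>M\<in>\<M>. ?N M) \<subseteq> {\<one>}" using sub triv by simp
    show "{\<one>} \<subseteq> carrier G \<inter> (\<Inter>M\<in>\<M>. ?N M)" using one by simp
  qed
  show ?thesis
    unfolding internal_cartesian_product_def
  proof (intro conjI ballI)
    fix M assume "M \<in> \<M>"
    show "closedin T (Inter_others \<M> M)" using cl by (rule closedin_Inter_others)
    show "Inter_others \<M> M \<lhd> G" using sg by (intro subgroup_imp_normal subgroup_Inter_others)
  next
    show "T closure_of generate G (\<Union>M\<in>\<M>. Inter_others \<M> M) = carrier G"
      by (rule closure_generate_Inter_others[OF assms])
  next
    show "carrier G \<inter> (\<Inter>M\<in>\<M>. ?N M) = {\<one>}" by (rule eq)
  qed
qed

lemma internal_cartesian_product_if_profinite_C_group: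
  assumes "profinite_C_group G T"
  shows "\<exists>(I :: 'a set set) H. internal_cartesian_product G T I H \<and>
           (\<forall>i\<in>I. Factorial_Ring.prime (card (H i)))"
proof -
  obtain \<M> where "independent_family \<M>" "carrier G \<inter> \<Inter>\<M> = {\<one>}"
    using exists_independent_family_Inter_trivial[OF assms] by blast
  then show ?thesis
    using internal_cartesian_product_Inter_others prime_card_Inter_others by blast
qed

end

theorem corollary2p10:
  fixes G :: "('a, 'b) monoid_scheme" and T :: "'a topology"
  assumes "profinite_group G T" and "comm_group G"
  shows "profinite_C_group G T \<longleftrightarrow>
           (\<exists>(I :: 'a set set) H. internal_cartesian_product G T I H \<and>
                (\<forall>i\<in>I. Factorial_Ring.prime (card (H i))))"
proof -
  interpret abelian_profinite G T
    using assms by (simp add: abelian_profinite_def profinite_def)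
  show ?thesis
    using internal_cartesian_product_if_profinite_C_group
      profinite_C_group_if_internal_cartesian_product by blast
qed

end
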